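(* Let $\mathcal{O}$ be an operad, $A$ a color of $\mathcal{O}$, and $L\subseteq\mathcal{O}(A)$ a regular language of constants. If $F:\mathcal{O}\to\mathcal{P}$ is a finitary ULF functor of operads, then the image $F(L)\subseteq\mathcal{P}(F(A))$ is a regular language of constants in $\mathcal{P}$.
   Context: Operads are colored, non-symmetric operads; $\mathcal{O}(A)$ denotes the set of constants (nullary operations) of output color $A$. A functor of operads $p:\mathcal{Q}\to\mathcal{O}$ is ULF if for every operation $\alpha$ of $\mathcal{Q}$ and operations $g,h$ of $\mathcal{O}$ and index $i$ with $p(\alpha)=g\circ_i h$ there is a unique pair $\beta,\gamma$ with $\alpha=\beta\circ_i\gamma$, $p(\beta)=g$, $p(\gamma)=h$; it is finitary if its fibers over every color and every operation are finite. A nondeterministic finite-state automaton over $\mathcal{O}$ is a tuple $M=(\mathcal{O},\mathcal{Q},p,q_r)$ with $p:\mathcal{Q}\to\mathcal{O}$ finitary ULF and $q_r$ a color of $\mathcal{Q}$; it recognizes $\{p(\alpha)\mid\alpha\in\mathcal{Q}(q_r)\}\subseteq\mathcal{O}(p(q_r))$. A subset $L\subseteq\mathcal{O}(A)$ is a regular language of constants if it is the language recognized by such an automaton with $p(q_r)=A$. *)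

theory Defs
  imports Main
begin

text \<open>An operad with colors of type 'c and operations of type 'o.
  src f is the list of input colors, tgt f the output color,
  ident c the identity at color c, and comp g i h is the partial composition
  g \<circ>_i h (0-based index i), meaningful when tgt h = src g ! i.\<close>

record ('c, 'o) operad =
  cols  :: "'c set"
  ops   :: "'o set"
  src   :: "'o \<Rightarrow> 'c list"
  tgt   :: "'o \<Rightarrow> 'c"
  ident :: "'c \<Rightarrow> 'o"
  comp  :: "'o \<Rightarrow> nat \<Rightarrow> 'o \<Rightarrow> 'o"

definition composable :: "('c, 'o, 'z) operad_scheme \<Rightarrow> 'o \<Rightarrow> nat \<Rightarrow> 'o \<Rightarrow> bool" where
  "composable Op g i h \<longleftrightarrow> g \<in> ops Op \<and> h \<in> ops Op \<and> i < length (src Op g) \<and> tgt Op h = src Op g ! i"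

definition is_operad :: "('c, 'o, 'z) operad_scheme \<Rightarrow> bool" where
  "is_operad Op \<longleftrightarrow>
     (\<forall>f\<in>ops Op. set (src Op f) \<subseteq> cols Op \<and> tgt Op f \<in> cols Op)
   \<and> (\<forall>c\<in>cols Op. ident Op c \<in> ops Op \<and> src Op (ident Op c) = [c] \<and> tgt Op (ident Op c) = c)
   \<and> (\<forall>g h i. composable Op g i h \<longrightarrow>
         comp Op g i h \<in> ops Op
       \<and> src Op (comp Op g i h) = take i (src Op g) @ src Op h @ drop (Suc i) (src Op g)
       \<and> tgt Op (comp Op g i h) = tgt Op g)
   \<and> (\<forall>h\<in>ops Op. comp Op (ident Op (tgt Op h)) 0 h = h)
   \<and> (\<forall>g\<in>ops Op. \<forall>i < length (src Op g). comp Op g i (ident Op (src Op g ! i)) = g)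
   \<and> (\<forall>f g h i j. composable Op f i g \<and> composable Op g j h \<longrightarrow>
         comp Op (comp Op f i g) (i + j) h = comp Op f i (comp Op g j h))
   \<and> (\<forall>f g h i k. composable Op f i g \<and> composable Op f k h \<and> i < k \<longrightarrow>
         comp Op (comp Op f k h) i g = comp Op (comp Op f i g) (k + length (src Op g) - 1) h)"

definition constants :: "('c, 'o, 'z) operad_scheme \<Rightarrow> 'c \<Rightarrow> 'o set" where
  "constants Op A = {f \<in> ops Op. src Op f = [] \<and> tgt Op f = A}"

definition is_functor ::
  "('c, 'o, 'z1) operad_scheme \<Rightarrow> ('d, 'p, 'z2) operad_scheme \<Rightarrow> ('c \<Rightarrow> 'd) \<Rightarrow> ('o \<Rightarrow> 'p) \<Rightarrow> bool" where
  "is_functor Op P Fc Fo \<longleftrightarrow>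
     Fc ` cols Op \<subseteq> cols P \<and> Fo ` ops Op \<subseteq> ops P
   \<and> (\<forall>f\<in>ops Op. src P (Fo f) = map Fc (src Op f) \<and> tgt P (Fo f) = Fc (tgt Op f))
   \<and> (\<forall>c\<in>cols Op. Fo (ident Op c) = ident P (Fc c))
   \<and> (\<forall>g i h. composable Op g i h \<longrightarrow> Fo (comp Op g i h) = comp P (Fo g) i (Fo h))"

definition is_ULF ::
  "('c, 'o, 'z1) operad_scheme \<Rightarrow> ('d, 'p, 'z2) operad_scheme \<Rightarrow> ('c \<Rightarrow> 'd) \<Rightarrow> ('o \<Rightarrow> 'p) \<Rightarrow> bool" where
  "is_ULF Q Op pc po \<longleftrightarrow> is_functor Q Op pc po \<and>
     (\<forall>\<alpha>\<in>ops Q. \<forall>g h i. composable Op g i h \<and> po \<alpha> = comp Op g i h \<longrightarrow>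
        (\<exists>!(\<beta>, \<gamma>). composable Q \<beta> i \<gamma> \<and> \<alpha> = comp Q \<beta> i \<gamma> \<and> po \<beta> = g \<and> po \<gamma> = h))"

definition is_finitary ::
  "('c, 'o, 'z1) operad_scheme \<Rightarrow> ('d, 'p, 'z2) operad_scheme \<Rightarrow> ('c \<Rightarrow> 'd) \<Rightarrow> ('o \<Rightarrow> 'p) \<Rightarrow> bool" where
  "is_finitary Q Op pc po \<longleftrightarrow> is_functor Q Op pc po \<and>
     (\<forall>c\<in>cols Op. finite {x \<in> cols Q. pc x = c}) \<and>
     (\<forall>f\<in>ops Op. finite {\<alpha> \<in> ops Q. po \<alpha> = f})"

text \<open>Nondeterministic finite-state automaton M = (O, Q, p, q_r) with p = (pc, po).\<close>
definition is_nfa ::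
  "('c, 'o, 'z1) operad_scheme \<Rightarrow> ('qc, 'qo, 'z2) operad_scheme \<Rightarrow> ('qc \<Rightarrow> 'c) \<Rightarrow> ('qo \<Rightarrow> 'o) \<Rightarrow> 'qc \<Rightarrow> bool" where
  "is_nfa Op Q pc po qr \<longleftrightarrow> is_operad Q \<and> is_finitary Q Op pc po \<and> is_ULF Q Op pc po \<and> qr \<in> cols Q"

definition recognized ::
  "('qc, 'qo, 'z2) operad_scheme \<Rightarrow> ('qo \<Rightarrow> 'o) \<Rightarrow> 'qc \<Rightarrow> 'o set" where
  "recognized Q po qr = po ` constants Q qr"

text \<open>L is a regular language of constants of color A in Op, witnessed by an automaton
  whose operad has colors of type 'qc and operations of type 'qo (fixed by the itself argument).\<close>
definition regular_lang ::
  "('qc \<times> 'qo) itself \<Rightarrow> ('c, 'o, 'z) operad_scheme \<Rightarrow> 'c \<Rightarrow> 'o set \<Rightarrow> bool" where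
  "regular_lang (_ :: ('qc \<times> 'qo) itself) Op A L \<longleftrightarrow>
     (\<exists>(Q :: ('qc, 'qo) operad) pc po qr. is_nfa Op Q pc po qr \<and> pc qr = A \<and> L = recognized Q po qr)"

end

theory Submission
  imports Defs
begin

text \<open>If \<open>p : Q \<rightarrow> O\<close> is the automaton recognizing \<open>L\<close>, then \<open>F \<circ> p : Q \<rightarrow> P\<close> is an automaton
  with the same root recognizing \<open>F(L)\<close>: finite fibres and unique lifting of factorizations
  are both stable under composition, since fibres of \<open>F \<circ> p\<close> are finite unions of fibres of \<open>p\<close>,
  and a factorization in \<open>P\<close> lifts uniquely first along \<open>F\<close> and then along \<open>p\<close>.\<close>

lemma is_functor_composable:
  assumes "is_functor Q Op pc po" "composable Q g i h"
  shows "composable Op (po g) i (po h)"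
  using assms unfolding is_functor_def composable_def by auto

lemma is_functor_ops:
  assumes "is_functor Q Op pc po" "\<alpha> \<in> ops Q"
  shows "po \<alpha> \<in> ops Op"
  using assms unfolding is_functor_def by blast

lemma is_functor_map_comp:
  assumes "is_functor Q Op pc po" "composable Q g i h"
  shows "po (comp Q g i h) = comp Op (po g) i (po h)"
  using assms unfolding is_functor_def by blast

lemma is_functor_comp:
  assumes "is_functor Q Op pc po" "is_functor Op P Fc Fo"
  shows "is_functor Q P (Fc \<circ> pc) (Fo \<circ> po)"
  using assms is_functor_composable[OF assms(1)] unfolding is_functor_def
  by (fastforce simp: image_subset_iff)

lemma finite_fibre_comp:
  assumes "f ` X \<subseteq> Y" "finite {y \<in> Y. g y = c}" "\<And>y. y \<in> Y \<Longrightarrow> finite {x \<in> X. f x = y}"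
  shows "finite {x \<in> X. g (f x) = c}"
proof -
  have "{x \<in> X. g (f x) = c} = (\<Union>y\<in>{y \<in> Y. g y = c}. {x \<in> X. f x = y})"
    using assms(1) by auto
  then show ?thesis
    using assms(2,3) by simp
qed

lemma is_finitary_comp:
  assumes pfin: "is_finitary Q Op pc po" and Ffin: "is_finitary Op P Fc Fo"
  shows "is_finitary Q P (Fc \<circ> pc) (Fo \<circ> po)"
proof -
  have p: "is_functor Q Op pc po" and F: "is_functor Op P Fc Fo"
    using assms unfolding is_finitary_def by auto
  have "finite {x \<in> cols Q. Fc (pc x) = c}" if "c \<in> cols P" for c
  proof (rule finite_fibre_comp[of pc "cols Q" "cols Op" Fc])
    show "pc ` cols Q \<subseteq> cols Op"
      using p unfolding is_functor_def by blast
    show "finite {y \<in> cols Op. Fc y = c}"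
      using Ffin that unfolding is_finitary_def by blast
    show "finite {x \<in> cols Q. pc x = y}" if "y \<in> cols Op" for y
      using pfin that unfolding is_finitary_def by blast
  qed
  moreover have "finite {x \<in> ops Q. Fo (po x) = f}" if "f \<in> ops P" for f
  proof (rule finite_fibre_comp[of po "ops Q" "ops Op" Fo])
    show "po ` ops Q \<subseteq> ops Op"
      using p unfolding is_functor_def by blast
    show "finite {y \<in> ops Op. Fo y = f}"
      using Ffin that unfolding is_finitary_def by blast
    show "finite {x \<in> ops Q. po x = y}" if "y \<in> ops Op" for y
      using pfin that unfolding is_finitary_def by blast
  qed
  ultimately show ?thesis
    using is_functor_comp[OF p F] unfolding is_finitary_def by simp
qed

lemma is_ULF_lift:
  assumes "is_ULF Q Op pc po" "\<alpha> \<in> ops Q" "composable Op g i h" "po \<alpha> = comp Op g i h"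
  obtains \<beta> \<gamma> where "composable Q \<beta> i \<gamma>" "\<alpha> = comp Q \<beta> i \<gamma>" "po \<beta> = g" "po \<gamma> = h"
  using assms unfolding is_ULF_def by blast

lemma is_ULF_lift_unique:
  assumes "is_ULF Q Op pc po" "\<alpha> \<in> ops Q"
    and "composable Q \<beta> i \<gamma>" "\<alpha> = comp Q \<beta> i \<gamma>"
    and "composable Q \<beta>' i \<gamma>'" "\<alpha> = comp Q \<beta>' i \<gamma>'"
    and "po \<beta> = po \<beta>'" "po \<gamma> = po \<gamma>'"
  shows "\<beta> = \<beta>' \<and> \<gamma> = \<gamma>'"
proof -
  have p: "is_functor Q Op pc po"
    using assms(1) unfolding is_ULF_def by blast
  have "composable Op (po \<beta>) i (po \<gamma>)" "po \<alpha> = comp Op (po \<beta>) i (po \<gamma>)"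
    using assms(3,4) is_functor_composable[OF p] is_functor_map_comp[OF p] by auto
  then have "\<exists>!(\<beta>'', \<gamma>''). composable Q \<beta>'' i \<gamma>'' \<and> \<alpha> = comp Q \<beta>'' i \<gamma>''
                 \<and> po \<beta>'' = po \<beta> \<and> po \<gamma>'' = po \<gamma>"
    using assms(1,2) unfolding is_ULF_def by blast
  then show ?thesis
    using assms(3-8) by (elim alt_ex1E) (metis (mono_tags) case_prod_conv prod.inject)
qed

lemma is_ULFI:
  assumes "is_functor Q Op pc po"
    and "\<And>\<alpha> g i h. \<alpha> \<in> ops Q \<Longrightarrow> composable Op g i h \<Longrightarrow> po \<alpha> = comp Op g i h \<Longrightarrow>
           \<exists>\<beta> \<gamma>. composable Q \<beta> i \<gamma> \<and> \<alpha> = comp Q \<beta> i \<gamma> \<and> po \<beta> = g \<and> po \<gamma> = h"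
    and "\<And>\<alpha> i \<beta> \<gamma> \<beta>' \<gamma>'. \<alpha> \<in> ops Q \<Longrightarrow>
           composable Q \<beta> i \<gamma> \<Longrightarrow> \<alpha> = comp Q \<beta> i \<gamma> \<Longrightarrow>
           composable Q \<beta>' i \<gamma>' \<Longrightarrow> \<alpha> = comp Q \<beta>' i \<gamma>' \<Longrightarrow>
           po \<beta> = po \<beta>' \<Longrightarrow> po \<gamma> = po \<gamma>' \<Longrightarrow> \<beta> = \<beta>' \<and> \<gamma> = \<gamma>'"
  shows "is_ULF Q Op pc po"
  unfolding is_ULF_def
proof (intro conjI assms(1) ballI allI impI)
  fix \<alpha> g h i
  assume "\<alpha> \<in> ops Q" and "composable Op g i h \<and> po \<alpha> = comp Op g i h"
  then obtain \<beta> \<gamma> where "composable Q \<beta> i \<gamma> \<and> \<alpha> = comp Q \<beta> i \<gamma> \<and> po \<beta> = g \<and> po \<gamma> = h"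
    using assms(2) by blast
  with \<open>\<alpha> \<in> ops Q\<close> show "\<exists>!(\<beta>, \<gamma>). composable Q \<beta> i \<gamma> \<and> \<alpha> = comp Q \<beta> i \<gamma> \<and> po \<beta> = g \<and> po \<gamma> = h"
    by (intro ex_ex1I) (auto dest: assms(3))
qed

lemma is_ULF_comp:
  assumes pULF: "is_ULF Q Op pc po" and FULF: "is_ULF Op P Fc Fo"
  shows "is_ULF Q P (Fc \<circ> pc) (Fo \<circ> po)"
proof (rule is_ULFI)
  have p: "is_functor Q Op pc po" and F: "is_functor Op P Fc Fo"
    using assms unfolding is_ULF_def by auto
  then show "is_functor Q P (Fc \<circ> pc) (Fo \<circ> po)"
    by (rule is_functor_comp)
  fix \<alpha> g i h
  assume \<alpha>: "\<alpha> \<in> ops Q" and "composable P g i h" "(Fo \<circ> po) \<alpha> = comp P g i h"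
  then obtain \<beta>' \<gamma>' where "composable Op \<beta>' i \<gamma>'" "po \<alpha> = comp Op \<beta>' i \<gamma>'" "Fo \<beta>' = g" "Fo \<gamma>' = h"
    using is_ULF_lift[OF FULF is_functor_ops[OF p \<alpha>], of g i h] by auto
  then obtain \<beta> \<gamma> where "composable Q \<beta> i \<gamma>" "\<alpha> = comp Q \<beta> i \<gamma>" "po \<beta> = \<beta>'" "po \<gamma> = \<gamma>'"
    using is_ULF_lift[OF pULF \<alpha>] by metis
  with \<open>Fo \<beta>' = g\<close> \<open>Fo \<gamma>' = h\<close>
  show "\<exists>\<beta> \<gamma>. composable Q \<beta> i \<gamma> \<and> \<alpha> = comp Q \<beta> i \<gamma> \<and> (Fo \<circ> po) \<beta> = g \<and> (Fo \<circ> po) \<gamma> = h"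
    by auto
next
  fix \<alpha> i \<beta> \<gamma> \<beta>' \<gamma>'
  assume \<alpha>: "\<alpha> \<in> ops Q"
    and fac: "composable Q \<beta> i \<gamma>" "\<alpha> = comp Q \<beta> i \<gamma>"
    and fac': "composable Q \<beta>' i \<gamma>'" "\<alpha> = comp Q \<beta>' i \<gamma>'"
    and Fo_eq: "(Fo \<circ> po) \<beta> = (Fo \<circ> po) \<beta>'" "(Fo \<circ> po) \<gamma> = (Fo \<circ> po) \<gamma>'"
  have p: "is_functor Q Op pc po"
    using pULF unfolding is_ULF_def by blast
  have "po \<alpha> = comp Op (po \<beta>) i (po \<gamma>)" "po \<alpha> = comp Op (po \<beta>') i (po \<gamma>')"
    using is_functor_map_comp[OF p fac(1)] is_functor_map_comp[OF p fac'(1)] fac(2) fac'(2)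
    by simp_all
  with FULF have "po \<beta> = po \<beta>' \<and> po \<gamma> = po \<gamma>'"
    by (rule is_ULF_lift_unique[OF _ is_functor_ops[OF p \<alpha>] is_functor_composable[OF p fac(1)] _
          is_functor_composable[OF p fac'(1)]]) (use Fo_eq in simp_all)
  then show "\<beta> = \<beta>' \<and> \<gamma> = \<gamma>'"
    using is_ULF_lift_unique[OF pULF \<alpha> fac fac'] by blast
qed

lemma is_nfa_comp:
  assumes "is_nfa Op Q pc po qr" "is_finitary Op P Fc Fo" "is_ULF Op P Fc Fo"
  shows "is_nfa P Q (Fc \<circ> pc) (Fo \<circ> po) qr"
  using assms is_finitary_comp is_ULF_comp unfolding is_nfa_def by blast

lemma recognized_comp: "recognized Q (Fo \<circ> po) qr = Fo ` recognized Q po qr"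
  unfolding recognized_def by (simp add: image_comp)

theorem mainTheorem11:
  fixes Op :: "('c, 'o) operad" and P :: "('d, 'p) operad"
    and Fc :: "'c \<Rightarrow> 'd" and Fo :: "'o \<Rightarrow> 'p"
    and A :: 'c and L :: "'o set"
  assumes "is_operad Op" and "is_operad P"
    and "A \<in> cols Op"
    and "regular_lang TYPE('qc \<times> 'qo) Op A L"
    and "is_finitary Op P Fc Fo" and "is_ULF Op P Fc Fo"
  shows "regular_lang TYPE('qc \<times> 'qo) P (Fc A) (Fo ` L)"
proof -
  obtain Q :: "('qc, 'qo) operad" and pc po qr
    where M: "is_nfa Op Q pc po qr" and root: "pc qr = A" and lang: "L = recognized Q po qr"
    using assms(4) unfolding regular_lang_def by blast
  have "is_nfa P Q (Fc \<circ> pc) (Fo \<circ> po) qr"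
    using is_nfa_comp[OF M assms(5,6)] .
  moreover have "(Fc \<circ> pc) qr = Fc A"
    using root by simp
  moreover have "Fo ` L = recognized Q (Fo \<circ> po) qr"
    using lang by (simp add: recognized_comp)
  ultimately show ?thesis
    unfolding regular_lang_def by blast
qed

end
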